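(* Let $0<c<1$. There is no set $A\subseteq\mathbb{N}$ such that $R_A(n)=cn+o(\sqrt{n})$ as $n\to\infty$.
   Context: $\mathbb{N}$ denotes the set of non-negative integers. For $A\subseteq\mathbb{N}$, $R_A(n)$ denotes the number of ordered pairs $(a,a')$ with $a,a'\in A$ and $a+a'=n$. *)

theory Defs
  imports "HOL-Analysis.Analysis" "HOL-Library.Landau_Symbols"
begin

definition rep_count :: "nat set \<Rightarrow> nat \<Rightarrow> nat" where
  "rep_count A n = card {(a, b). a \<in> A \<and> b \<in> A \<and> a + b = n}"

end

theory Submission
  imports Defs "HOL-Real_Asymp.Real_Asymp"
begin

(* Let F = sum of s^a over a \<in> A, a < N, where s = 1 - t is close to 1, and let P be the generating
   polynomial of A \<inter> [0, N). Its coefficients are 0 or 1, so by Parseval (in finite form, at the 2N-th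
   roots of unity on the circle |z| = sqrt s) the mean of |P|^2 is F itself. Now P^2 = c H\<^sub>1 H\<^sub>2 + D,
   where H\<^sub>1 H\<^sub>2 = (1 + ... + z^(N-1)) (z + ... + z^N) has coefficient n at z^n for n \<le> N, so the
   coefficients of D below N are the deviations R_A(n) - c n = o(sqrt n). Bounding |H\<^sub>1 H\<^sub>2| by
   (|H\<^sub>1|^2 + |H\<^sub>2|^2) / 2 and the mean of |D| by its root mean square, Parseval gives t F \<le> c + O(\<epsilon>).
   On the other hand F^2 \<ge> sum of R_A(n) s^n over n < N, which is about c / t^2, so (t F)^2 \<ge> c - O(\<epsilon>).
   Together c \<le> c^2 + O(\<epsilon>), which is absurd for 0 < c < 1. *)

lemma sum_cis_multiples:
  fixes j :: int
  assumes "0 < M"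
  shows "(\<Sum>k<M. cis (j * (2 * pi * real k / M))) = (if int M dvd j then of_nat M else 0)"
proof -
  define \<omega> where "\<omega> = cis (2 * pi * j / M)"
  have powers: "cis (j * (2 * pi * real k / M)) = \<omega> ^ k" for k
    unfolding \<omega>_def Complex.DeMoivre by (simp add: mult_ac)
  have "\<omega> = 1 \<longleftrightarrow> int M dvd j"
  proof
    assume "\<omega> = 1"
    then obtain m :: int where "2 * pi * j / M = m * 2 * pi"
      by (auto simp: \<omega>_def complex_eq_iff cos_one_2pi_int)
    then have "real_of_int j = real_of_int (m * int M)"
      using assms by (simp add: field_simps)
    then show "int M dvd j" by (metis dvd_triv_right mult.commute of_int_eq_iff)
  next
    assume "int M dvd j"
    then obtain m where "j = int M * m" by blast
    then have "2 * pi * j / M = 2 * pi * real_of_int m" using assms by simp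
    then show "\<omega> = 1" by (simp add: \<omega>_def)
  qed
  moreover have "\<omega> ^ M = 1"
    using assms by (simp add: \<omega>_def Complex.DeMoivre)
  ultimately show ?thesis
    unfolding powers by (auto simp: geometric_sum)
qed

lemma dvd_diff_less_iff_eq:
  fixes m n M :: nat
  assumes "m < M" "n < M"
  shows "int M dvd (int m - int n) \<longleftrightarrow> m = n"
proof
  assume "int M dvd (int m - int n)"
  then obtain d where d: "int m - int n = int M * d" by blast
  have "\<bar>int m - int n\<bar> < int M" using assms by linarith
  with d have "int M * \<bar>d\<bar> < int M * 1" by (simp add: abs_mult)
  then have "d = 0" by (simp only: mult_less_cancel_left) simp
  with d show "m = n" by simp
qed simp

lemma power_rcis_mult_cnj:
  fixes a b :: complex and r \<theta> :: real
  shows "(a * (r * cis \<theta>) ^ m) * cnj (b * (r * cis \<theta>) ^ n)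
           = a * cnj b * r ^ (m + n) * cis ((int m - int n) * \<theta>)"
proof -
  have pow: "(complex_of_real r * cis \<theta>) ^ i = of_real (r ^ i) * cis (real i * \<theta>)" for i
    by (simp add: power_mult_distrib Complex.DeMoivre)
  show ?thesis
    unfolding pow by (simp add: power_add cis_cnj algebra_simps cis_mult)
qed

lemma parseval_roots_of_unity:
  fixes q :: "nat \<Rightarrow> complex" and r :: real
  assumes "S \<subseteq> {..<M}"
  shows "(\<Sum>k<M. (cmod (\<Sum>n\<in>S. q n * (r * cis (2 * pi * real k / M)) ^ n))\<^sup>2)
           = M * (\<Sum>n\<in>S. (cmod (q n))\<^sup>2 * r ^ (2 * n))"
proof (cases "M = 0")
  case True
  with assms show ?thesis by simp
next
  case False
  have fin: "finite S" using assms finite_subset by blast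
  define w where "w m n = q m * cnj (q n) * r ^ (m + n)" for m n
  define \<theta> where "\<theta> k = 2 * pi * real k / M" for k
  have "complex_of_real (\<Sum>k<M. (cmod (\<Sum>n\<in>S. q n * (r * cis (\<theta> k)) ^ n))\<^sup>2)
      = (\<Sum>k<M. \<Sum>m\<in>S. \<Sum>n\<in>S. w m n * cis ((int m - int n) * \<theta> k))"
    unfolding of_real_sum complex_norm_square
    by (simp only: sum_product cnj_sum power_rcis_mult_cnj w_def)
  also have "\<dots> = (\<Sum>m\<in>S. \<Sum>n\<in>S. w m n * (\<Sum>k<M. cis ((int m - int n) * \<theta> k)))"
    by (simp add: sum_distrib_left sum.swap[of _ "{..<M}"])
  also have "\<dots> = (\<Sum>m\<in>S. \<Sum>n\<in>S. if m = n then w m n * M else 0)"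
  proof (intro sum.cong refl)
    fix m n assume "m \<in> S" "n \<in> S"
    with assms have "m < M" "n < M" by auto
    then show "w m n * (\<Sum>k<M. cis ((int m - int n) * \<theta> k)) = (if m = n then w m n * M else 0)"
      using False sum_cis_multiples[of M "int m - int n"] dvd_diff_less_iff_eq[of m M n]
      by (simp add: \<theta>_def)
  qed
  also have "\<dots> = complex_of_real (M * (\<Sum>n\<in>S. (cmod (q n))\<^sup>2 * r ^ (2 * n)))"
  proof -
    have diag: "w n n = of_real ((cmod (q n))\<^sup>2 * r ^ (2 * n))" for n
      unfolding w_def of_real_mult complex_norm_square by (simp add: mult_2)
    show ?thesis
      using fin by (simp add: diag sum_distrib_left mult_ac)
  qed
  finally show ?thesis by (simp only: of_real_eq_iff \<theta>_def)
qed

definition pair_count :: "nat set \<Rightarrow> nat set \<Rightarrow> nat \<Rightarrow> nat" where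
  "pair_count S T n = card {(a, b). a \<in> S \<and> b \<in> T \<and> a + b = n}"

lemma sum_power_mult_sum_power:
  fixes z :: "'a::comm_semiring_1"
  assumes "finite S" "finite T" "\<And>a b. a \<in> S \<Longrightarrow> b \<in> T \<Longrightarrow> a + b < L"
  shows "(\<Sum>a\<in>S. z ^ a) * (\<Sum>b\<in>T. z ^ b) = (\<Sum>n<L. of_nat (pair_count S T n) * z ^ n)"
proof -
  have pairs: "{p \<in> S \<times> T. fst p + snd p = n} = {(a, b). a \<in> S \<and> b \<in> T \<and> a + b = n}" for n
    by auto
  have "(\<Sum>a\<in>S. z ^ a) * (\<Sum>b\<in>T. z ^ b) = (\<Sum>p\<in>S \<times> T. z ^ (fst p + snd p))"
    by (simp add: sum_product sum.cartesian_product power_add case_prod_beta)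
  also have "\<dots> = (\<Sum>n<L. \<Sum>p\<in>{p \<in> S \<times> T. fst p + snd p = n}. z ^ (fst p + snd p))"
    using assms by (intro sum.group[symmetric]) auto
  also have "\<dots> = (\<Sum>n<L. \<Sum>p\<in>{p \<in> S \<times> T. fst p + snd p = n}. z ^ n)"
    by (intro sum.cong refl) auto
  also have "\<dots> = (\<Sum>n<L. of_nat (pair_count S T n) * z ^ n)"
    by (simp add: pairs pair_count_def)
  finally show ?thesis .
qed

lemma pair_count_le: "pair_count S T n \<le> n + 1"
proof -
  have "{(a, b). a \<in> S \<and> b \<in> T \<and> a + b = n} \<subseteq> (\<lambda>a. (a, n - a)) ` {..n}" by force
  then have "pair_count S T n \<le> card ((\<lambda>a. (a, n - a)) ` {..n})"
    unfolding pair_count_def by (intro card_mono) auto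
  also have "\<dots> \<le> n + 1" using card_image_le[of "{..n}" "\<lambda>a. (a, n - a)"] by simp
  finally show ?thesis .
qed

lemma abs_pair_count_deviation_le:
  fixes c :: real
  assumes "0 \<le> c" "c \<le> 1"
  shows "\<bar>real (pair_count S S' n) - c * real (pair_count T U n)\<bar> \<le> real n + 1"
proof -
  have "real (pair_count S S' n) \<le> real n + 1" "real (pair_count T U n) \<le> real n + 1"
    using pair_count_le[of S S' n] pair_count_le[of T U n] by linarith+
  moreover have "0 \<le> c * real (pair_count T U n)" "c * real (pair_count T U n) \<le> real (pair_count T U n)"
    using assms by (simp_all add: mult_left_le_one_le)
  ultimately show ?thesis by linarith
qed

lemma pair_count_truncation:
  assumes "n < N"
  shows "pair_count (A \<inter> {..<N}) (A \<inter> {..<N}) n = rep_count A n"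
  unfolding pair_count_def rep_count_def using assms by (intro arg_cong[where f = card]) auto

lemma pair_count_lessThan_atLeastAtMost:
  assumes "n \<le> N"
  shows "pair_count {..<N} {1..N} n = n"
proof -
  have "{(a, b). a \<in> {..<N} \<and> b \<in> {1..N} \<and> a + b = n} = (\<lambda>a. (a, n - a)) ` {..<n}"
    using assms by force
  moreover have "inj_on (\<lambda>a. (a, n - a)) {..<n}" by (auto simp: inj_on_def)
  ultimately show ?thesis by (simp add: pair_count_def card_image)
qed

lemma parseval_roots_of_unity_set:
  assumes "S \<subseteq> {..<M}" "0 \<le> s"
  shows "(\<Sum>k<M. (cmod (\<Sum>a\<in>S. (sqrt s * cis (2 * pi * real k / M)) ^ a))\<^sup>2) = M * (\<Sum>a\<in>S. s ^ a)"
  using parseval_roots_of_unity[OF assms(1), of "\<lambda>_. 1" "sqrt s"] assms(2) by (simp add: power_mult)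

lemma sum_le_sqrt_card_mult_sum_squares:
  fixes f :: "'a \<Rightarrow> real"
  shows "(\<Sum>i\<in>I. f i) \<le> sqrt (card I * (\<Sum>i\<in>I. (f i)\<^sup>2))"
  using sum_squared_le_sum_of_squares[of f I] by (intro real_le_rsqrt) (simp add: mult.commute)

lemma norm_square_le_of_square_eq:
  fixes p h1 h2 d :: complex and c :: real
  assumes "p * p = c * (h1 * h2) + d" "0 \<le> c"
  shows "(cmod p)\<^sup>2 \<le> c * ((cmod h1)\<^sup>2 + (cmod h2)\<^sup>2) / 2 + cmod d"
proof -
  have "(cmod p)\<^sup>2 = cmod (c * (h1 * h2) + d)"
    by (simp flip: assms(1) add: norm_mult power2_eq_square)
  also have "\<dots> \<le> c * (cmod h1 * cmod h2) + cmod d"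
    using norm_triangle_ineq[of "c * (h1 * h2)" d] \<open>0 \<le> c\<close> by (simp add: norm_mult)
  also have "cmod h1 * cmod h2 \<le> ((cmod h1)\<^sup>2 + (cmod h2)\<^sup>2) / 2"
    using sum_squares_bound[of "cmod h1" "cmod h2"] by (simp add: power2_eq_square)
  finally show ?thesis using \<open>0 \<le> c\<close> by (simp add: mult_left_mono)
qed

lemma sum_power_le_pair_count_deviation:
  fixes S T U :: "nat set" and c s :: real
  assumes S: "\<And>a b. a \<in> S \<Longrightarrow> b \<in> S \<Longrightarrow> a + b < M"
    and T: "T \<subseteq> {..<M}" and U: "U \<subseteq> {..<M}"
    and TU: "\<And>a b. a \<in> T \<Longrightarrow> b \<in> U \<Longrightarrow> a + b < M"
    and "0 \<le> c" "0 \<le> s"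
  shows "(\<Sum>a\<in>S. s ^ a) \<le> c * ((\<Sum>a\<in>T. s ^ a) + (\<Sum>a\<in>U. s ^ a)) / 2
           + sqrt (\<Sum>n<M. (pair_count S S n - c * pair_count T U n)\<^sup>2 * s ^ n)"
proof -
  have S_sub: "S \<subseteq> {..<M}"
    using S by (meson add_lessD1 lessThan_iff subsetI)
  then have fin: "finite S" "finite T" "finite U"
    using T U by (auto intro: finite_subset)
  define d where "d n = real (pair_count S S n) - c * real (pair_count T U n)" for n
  define B where "B = (\<Sum>n<M. (d n)\<^sup>2 * s ^ n)"
  define z where "z k = complex_of_real (sqrt s) * cis (2 * pi * real k / M)" for k
  define D where "D w = (\<Sum>n<M. of_real (d n) * w ^ n)" for w :: complex
  have "(\<Sum>a\<in>S. w ^ a) * (\<Sum>a\<in>S. w ^ a) = c * ((\<Sum>a\<in>T. w ^ a) * (\<Sum>a\<in>U. w ^ a)) + D w" for w :: complex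
    using sum_power_mult_sum_power[of S S M w] sum_power_mult_sum_power[of T U M w] fin S TU
    by (simp add: D_def d_def sum_distrib_left algebra_simps flip: sum.distrib)
  then have pointwise: "(cmod (\<Sum>a\<in>S. w ^ a))\<^sup>2
      \<le> c * ((cmod (\<Sum>a\<in>T. w ^ a))\<^sup>2 + (cmod (\<Sum>a\<in>U. w ^ a))\<^sup>2) / 2 + cmod (D w)" for w :: complex
    using \<open>0 \<le> c\<close> by (rule norm_square_le_of_square_eq)
  have "(\<Sum>k<M. cmod (D (z k))) \<le> sqrt (M * (\<Sum>k<M. (cmod (D (z k)))\<^sup>2))"
    using sum_le_sqrt_card_mult_sum_squares[of "\<lambda>k. cmod (D (z k))" "{..<M}"] by simp
  also have "\<dots> = M * sqrt B"
    using parseval_roots_of_unity[of "{..<M}" M "\<lambda>n. of_real (d n)" "sqrt s"] \<open>0 \<le> s\<close>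
    by (simp add: D_def B_def z_def power_mult real_sqrt_mult)
  finally have mean_abs_D: "(\<Sum>k<M. cmod (D (z k))) \<le> M * sqrt B" .
  have "M * (\<Sum>a\<in>S. s ^ a) = (\<Sum>k<M. (cmod (\<Sum>a\<in>S. z k ^ a))\<^sup>2)"
    using parseval_roots_of_unity_set[OF S_sub \<open>0 \<le> s\<close>] by (simp add: z_def)
  also have "\<dots> \<le> (\<Sum>k<M. c * ((cmod (\<Sum>a\<in>T. z k ^ a))\<^sup>2 + (cmod (\<Sum>a\<in>U. z k ^ a))\<^sup>2) / 2
                            + cmod (D (z k)))"
    by (intro sum_mono pointwise)
  also have "\<dots> \<le> M * (c * ((\<Sum>a\<in>T. s ^ a) + (\<Sum>a\<in>U. s ^ a)) / 2 + sqrt B)"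
    using mean_abs_D parseval_roots_of_unity_set[OF T \<open>0 \<le> s\<close>] parseval_roots_of_unity_set[OF U \<open>0 \<le> s\<close>]
    by (simp add: z_def sum.distrib algebra_simps flip: sum_distrib_left sum_divide_distrib)
  finally have "M * (\<Sum>a\<in>S. s ^ a) \<le> M * (c * ((\<Sum>a\<in>T. s ^ a) + (\<Sum>a\<in>U. s ^ a)) / 2 + sqrt B)" .
  moreover have "M = 0 \<Longrightarrow> S = {} \<and> T = {} \<and> U = {}"
    using S_sub T U by auto
  ultimately show ?thesis
    using \<open>0 \<le> c\<close> by (cases "M = 0") (simp_all add: B_def d_def)
qed

lemma sum_power_lessThan_le:
  fixes s :: real
  assumes "0 \<le> s" "s < 1"
  shows "(\<Sum>n<N. s ^ n) \<le> 1 / (1 - s)"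
proof -
  have "(\<Sum>n<N. s ^ n) = (1 - s ^ N) / (1 - s)" using assms by (simp add: sum_gp_strict)
  also have "\<dots> \<le> 1 / (1 - s)" using assms by (intro divide_right_mono) auto
  finally show ?thesis .
qed

lemma sum_power_atLeastAtMost_le:
  fixes s :: real
  assumes "0 \<le> s" "s < 1"
  shows "(\<Sum>n\<in>{1..N}. s ^ n) \<le> 1 / (1 - s)"
proof -
  have "(\<Sum>n\<in>{1..N}. s ^ n) \<le> (\<Sum>n<N + 1. s ^ n)"
    using assms by (intro sum_mono2) auto
  also have "\<dots> \<le> 1 / (1 - s)" using assms by (rule sum_power_lessThan_le)
  finally show ?thesis .
qed

lemma sum_of_nat_mult_power_closed_form:
  fixes s :: real
  shows "(1 - s)\<^sup>2 * (\<Sum>n<N. real n * s ^ n) = s - real N * s ^ N + (real N - 1) * s ^ (N + 1)"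
proof (induction N)
  case (Suc N)
  have "(1 - s)\<^sup>2 * (\<Sum>n<Suc N. real n * s ^ n)
      = s - real N * s ^ N + (real N - 1) * s ^ (N + 1) + (1 - s)\<^sup>2 * (real N * s ^ N)"
    using Suc by (simp add: distrib_left)
  also have "\<dots> = s - real (Suc N) * s ^ Suc N + (real (Suc N) - 1) * s ^ (Suc N + 1)"
    by (simp add: power2_eq_square algebra_simps)
  finally show ?case .
qed simp

lemma sum_of_nat_mult_power_le:
  fixes s :: real
  assumes "0 \<le> s" "s < 1"
  shows "(\<Sum>n<N. real n * s ^ n) \<le> 1 / (1 - s)\<^sup>2"
proof -
  have "(real N - 1) * s ^ (N + 1) \<le> real N * s ^ (N + 1)"
    using assms by (simp add: mult_right_mono)
  also have "\<dots> \<le> real N * s ^ N"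
    using assms by (intro mult_left_mono power_decreasing) auto
  finally have "(1 - s)\<^sup>2 * (\<Sum>n<N. real n * s ^ n) \<le> s"
    unfolding sum_of_nat_mult_power_closed_form by linarith
  also have "s \<le> 1" using assms by simp
  finally show ?thesis
    using assms by (simp add: pos_le_divide_eq mult.commute)
qed

lemma sum_of_nat_mult_power_ge:
  fixes s :: real
  assumes "0 \<le> s" "s < 1" "0 < N"
  shows "(s - real N * s ^ N) / (1 - s)\<^sup>2 \<le> (\<Sum>n<N. real n * s ^ n)"
proof -
  have "0 \<le> (real N - 1) * s ^ (N + 1)"
    using assms by simp
  then have "s - real N * s ^ N \<le> (1 - s)\<^sup>2 * (\<Sum>n<N. real n * s ^ n)"
    unfolding sum_of_nat_mult_power_closed_form by linarith
  then show ?thesis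
    using assms by (simp add: pos_divide_le_eq mult.commute)
qed

lemma sqrt_of_nat_le: "sqrt (real n) \<le> real n"
proof -
  have "real n \<le> (real n)\<^sup>2" by (cases n) (auto simp: power2_eq_square)
  then show ?thesis by (metis real_sqrt_abs abs_of_nat real_sqrt_le_mono)
qed

lemma smallo_imp_le_mult_plus_const:
  fixes f g :: "nat \<Rightarrow> real"
  assumes "f \<in> o(g)" "0 < \<epsilon>"
  obtains C where "0 \<le> C" "\<And>n. \<bar>f n\<bar> \<le> \<epsilon> * \<bar>g n\<bar> + C"
proof -
  obtain n0 where n0: "\<And>n. n \<ge> n0 \<Longrightarrow> \<bar>f n\<bar> \<le> \<epsilon> * \<bar>g n\<bar>"
    using landau_o.smallD[OF assms] unfolding eventually_sequentially by auto
  have "\<bar>f n\<bar> \<le> \<epsilon> * \<bar>g n\<bar> + (\<Sum>m<n0. \<bar>f m\<bar>)" for n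
  proof (cases "n < n0")
    case True
    then have "\<bar>f n\<bar> \<le> (\<Sum>m<n0. \<bar>f m\<bar>)" by (intro member_le_sum) auto
    with \<open>0 < \<epsilon>\<close> show ?thesis by (simp add: add_increasing)
  next
    case False
    with n0[of n] show ?thesis by (simp add: add_increasing2 sum_nonneg)
  qed
  then show ?thesis by (intro that[of "\<Sum>m<n0. \<bar>f m\<bar>"]) (simp_all add: sum_nonneg)
qed

lemma weighted_sum_squares_le_of_sqrt_bound:
  fixes d :: "nat \<Rightarrow> real" and s \<epsilon> C :: real
  assumes "0 \<le> s" "s < 1" and bound: "\<And>n. n < N \<Longrightarrow> \<bar>d n\<bar> \<le> \<epsilon> * sqrt n + C"
  shows "(\<Sum>n<N. (d n)\<^sup>2 * s ^ n) \<le> 2 * \<epsilon>\<^sup>2 * (1 / (1 - s)\<^sup>2) + 2 * C\<^sup>2 * (1 / (1 - s))"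
proof -
  have "(d n)\<^sup>2 \<le> 2 * \<epsilon>\<^sup>2 * real n + 2 * C\<^sup>2" if "n < N" for n
  proof -
    have "(d n)\<^sup>2 \<le> (\<epsilon> * sqrt n + C)\<^sup>2"
      using power_mono[OF bound[OF that] abs_ge_zero, of 2] by simp
    also have "\<dots> \<le> 2 * (\<epsilon> * sqrt n)\<^sup>2 + 2 * C\<^sup>2"
      using sum_squares_bound[of "\<epsilon> * sqrt n" C] by (simp add: power2_sum)
    finally show ?thesis by (simp add: power_mult_distrib)
  qed
  then have "(\<Sum>n<N. (d n)\<^sup>2 * s ^ n) \<le> (\<Sum>n<N. (2 * \<epsilon>\<^sup>2 * real n + 2 * C\<^sup>2) * s ^ n)"
    using \<open>0 \<le> s\<close> by (intro sum_mono mult_right_mono) auto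
  also have "\<dots> = 2 * \<epsilon>\<^sup>2 * (\<Sum>n<N. real n * s ^ n) + 2 * C\<^sup>2 * (\<Sum>n<N. s ^ n)"
    by (simp add: algebra_simps sum.distrib sum_distrib_left sum_distrib_right)
  also have "\<dots> \<le> 2 * \<epsilon>\<^sup>2 * (1 / (1 - s)\<^sup>2) + 2 * C\<^sup>2 * (1 / (1 - s))"
    using assms sum_of_nat_mult_power_le sum_power_lessThan_le by (intro add_mono mult_left_mono) auto
  finally show ?thesis .
qed

lemma weighted_sum_squares_upper_half_le:
  fixes d :: "nat \<Rightarrow> real" and s :: real
  assumes "0 \<le> s" "s \<le> 1" and bound: "\<And>n. n \<in> {N..<2 * N} \<Longrightarrow> \<bar>d n\<bar> \<le> 2 * real N"
  shows "(\<Sum>n\<in>{N..<2 * N}. (d n)\<^sup>2 * s ^ n) \<le> 4 * real N ^ 3 * s ^ N"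
proof -
  have "(d n)\<^sup>2 * s ^ n \<le> (2 * real N)\<^sup>2 * s ^ N" if "n \<in> {N..<2 * N}" for n
  proof -
    have "(d n)\<^sup>2 \<le> (2 * real N)\<^sup>2"
      using power_mono[OF bound[OF that] abs_ge_zero, of 2] by simp
    moreover have "s ^ n \<le> s ^ N"
      using that assms by (intro power_decreasing) auto
    ultimately show ?thesis
      using \<open>0 \<le> s\<close> by (intro mult_mono) auto
  qed
  then have "(\<Sum>n\<in>{N..<2 * N}. (d n)\<^sup>2 * s ^ n) \<le> card {N..<2 * N} * ((2 * real N)\<^sup>2 * s ^ N)"
    by (rule sum_bounded_above)
  then show ?thesis by (simp add: power2_eq_square power3_eq_cube)
qed

lemma weighted_sum_squares_truncated_deviation_le:
  fixes A :: "nat set" and c s \<epsilon> C :: real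
  assumes "0 \<le> c" "c \<le> 1" "0 \<le> s" "s < 1"
    and err: "\<And>n. n < N \<Longrightarrow> \<bar>real (rep_count A n) - c * real n\<bar> \<le> \<epsilon> * sqrt n + C"
  shows "(1 - s)\<^sup>2 * (\<Sum>n<2 * N. (real (pair_count (A \<inter> {..<N}) (A \<inter> {..<N}) n)
                                    - c * real (pair_count {..<N} {1..N} n))\<^sup>2 * s ^ n)
           \<le> 2 * \<epsilon>\<^sup>2 + 2 * C\<^sup>2 * (1 - s) + 4 * (1 - s)\<^sup>2 * real N ^ 3 * s ^ N"
proof -
  define d where "d n = real (pair_count (A \<inter> {..<N}) (A \<inter> {..<N}) n)
                         - c * real (pair_count {..<N} {1..N} n)" for n
  have "d n = real (rep_count A n) - c * real n" if "n < N" for n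
    using that pair_count_truncation[OF that] pair_count_lessThan_atLeastAtMost[of n N]
    by (simp add: d_def)
  then have head: "(\<Sum>n<N. (d n)\<^sup>2 * s ^ n) \<le> 2 * \<epsilon>\<^sup>2 * (1 / (1 - s)\<^sup>2) + 2 * C\<^sup>2 * (1 / (1 - s))"
    using assms(3,4) err by (intro weighted_sum_squares_le_of_sqrt_bound) auto
  have "\<bar>d n\<bar> \<le> 2 * real N" if "n \<in> {N..<2 * N}" for n
  proof -
    have "\<bar>d n\<bar> \<le> real n + 1"
      unfolding d_def by (rule abs_pair_count_deviation_le[OF assms(1,2)])
    also have "\<dots> \<le> 2 * real N"
      using that by simp
    finally show ?thesis .
  qed
  then have tail: "(\<Sum>n\<in>{N..<2 * N}. (d n)\<^sup>2 * s ^ n) \<le> 4 * real N ^ 3 * s ^ N"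
    using assms(3,4) by (intro weighted_sum_squares_upper_half_le) auto
  have split: "(\<Sum>n<2 * N. (d n)\<^sup>2 * s ^ n) = (\<Sum>n<N. (d n)\<^sup>2 * s ^ n) + (\<Sum>n\<in>{N..<2 * N}. (d n)\<^sup>2 * s ^ n)"
    using sum.atLeastLessThan_concat[of 0 N "2 * N" "\<lambda>n. (d n)\<^sup>2 * s ^ n"] by (simp add: atLeast0LessThan)
  have "(1 - s)\<^sup>2 * (\<Sum>n<2 * N. (d n)\<^sup>2 * s ^ n)
      \<le> (1 - s)\<^sup>2 * (2 * \<epsilon>\<^sup>2 * (1 / (1 - s)\<^sup>2) + 2 * C\<^sup>2 * (1 / (1 - s)) + 4 * real N ^ 3 * s ^ N)"
    unfolding split using head tail by (intro mult_left_mono) auto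
  also have "\<dots> = 2 * \<epsilon>\<^sup>2 + 2 * C\<^sup>2 * (1 - s) + 4 * (1 - s)\<^sup>2 * real N ^ 3 * s ^ N"
    using \<open>s < 1\<close> by (simp add: distrib_left power2_eq_square)
  finally show ?thesis by (simp add: d_def)
qed

lemma truncated_generating_function_upper:
  fixes A :: "nat set" and c s \<epsilon> C :: real
  assumes "0 \<le> c" "c \<le> 1" "0 \<le> s" "s < 1"
    and err: "\<And>n. n < N \<Longrightarrow> \<bar>real (rep_count A n) - c * real n\<bar> \<le> \<epsilon> * sqrt n + C"
  shows "(1 - s) * (\<Sum>a\<in>A \<inter> {..<N}. s ^ a)
           \<le> c + sqrt (2 * \<epsilon>\<^sup>2 + 2 * C\<^sup>2 * (1 - s) + 4 * (1 - s)\<^sup>2 * real N ^ 3 * s ^ N)"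
proof -
  define B where "B = (\<Sum>n<2 * N. (real (pair_count (A \<inter> {..<N}) (A \<inter> {..<N}) n)
                                    - c * real (pair_count {..<N} {1..N} n))\<^sup>2 * s ^ n)"
  have "(\<Sum>a\<in>A \<inter> {..<N}. s ^ a) \<le> c * ((\<Sum>a<N. s ^ a) + (\<Sum>a\<in>{1..N}. s ^ a)) / 2 + sqrt B"
    unfolding B_def using assms(1,3) by (intro sum_power_le_pair_count_deviation) auto
  also have "c * ((\<Sum>a<N. s ^ a) + (\<Sum>a\<in>{1..N}. s ^ a)) / 2 \<le> c / (1 - s)"
    using mult_left_mono[OF add_mono \<open>0 \<le> c\<close>,
        OF sum_power_lessThan_le[OF assms(3,4), of N] sum_power_atLeastAtMost_le[OF assms(3,4), of N]]
    by simp
  finally have "(1 - s) * (\<Sum>a\<in>A \<inter> {..<N}. s ^ a) \<le> (1 - s) * (c / (1 - s) + sqrt B)"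
    using \<open>s < 1\<close> by (intro mult_left_mono) auto
  also have "\<dots> = c + sqrt ((1 - s)\<^sup>2 * B)"
    using \<open>s < 1\<close> by (simp add: distrib_left real_sqrt_mult)
  also have "\<dots> \<le> c + sqrt (2 * \<epsilon>\<^sup>2 + 2 * C\<^sup>2 * (1 - s) + 4 * (1 - s)\<^sup>2 * real N ^ 3 * s ^ N)"
    unfolding B_def using weighted_sum_squares_truncated_deviation_le[OF assms] by simp
  finally show ?thesis .
qed

lemma sum_rep_count_le_square_sum_power:
  fixes s :: real
  assumes "0 \<le> s"
  shows "(\<Sum>n<N. real (rep_count A n) * s ^ n) \<le> (\<Sum>a\<in>A \<inter> {..<N}. s ^ a)\<^sup>2"
proof -
  have "(\<Sum>n<N. real (rep_count A n) * s ^ n)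
      = (\<Sum>n<N. real (pair_count (A \<inter> {..<N}) (A \<inter> {..<N}) n) * s ^ n)"
    by (intro sum.cong refl) (simp add: pair_count_truncation)
  also have "\<dots> \<le> (\<Sum>n<2 * N. real (pair_count (A \<inter> {..<N}) (A \<inter> {..<N}) n) * s ^ n)"
    using \<open>0 \<le> s\<close> by (intro sum_mono2) auto
  also have "\<dots> = (\<Sum>a\<in>A \<inter> {..<N}. s ^ a)\<^sup>2"
    unfolding power2_eq_square by (rule sum_power_mult_sum_power[symmetric]) auto
  finally show ?thesis .
qed

lemma truncated_generating_function_lower:
  fixes A :: "nat set" and c s \<epsilon> C :: real
  assumes "0 \<le> c" "0 \<le> s" "s < 1" "0 < N" "0 \<le> \<epsilon>" "0 \<le> C"
    and err: "\<And>n. n < N \<Longrightarrow> \<bar>real (rep_count A n) - c * real n\<bar> \<le> \<epsilon> * sqrt n + C"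
  shows "c * (s - real N * s ^ N) - \<epsilon> - C * (1 - s) \<le> ((1 - s) * (\<Sum>a\<in>A \<inter> {..<N}. s ^ a))\<^sup>2"
proof -
  define X where "X = (\<Sum>n<N. real n * s ^ n)"
  have "c * ((s - real N * s ^ N) / (1 - s)\<^sup>2) - \<epsilon> * (1 / (1 - s)\<^sup>2) - C * (1 / (1 - s))
      \<le> c * X - \<epsilon> * X - C * (\<Sum>n<N. s ^ n)"
    using assms sum_of_nat_mult_power_ge sum_of_nat_mult_power_le sum_power_lessThan_le
    unfolding X_def by (intro diff_mono mult_left_mono) auto
  also have "\<dots> = (\<Sum>n<N. (c * real n - \<epsilon> * real n - C) * s ^ n)"
    by (simp add: X_def algebra_simps sum_subtractf sum.distrib sum_distrib_left)
  also have "\<dots> \<le> (\<Sum>n<N. real (rep_count A n) * s ^ n)"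
  proof (intro sum_mono mult_right_mono)
    fix n assume "n \<in> {..<N}"
    then have "\<bar>real (rep_count A n) - c * real n\<bar> \<le> \<epsilon> * real n + C"
      using err[of n] mult_left_mono[OF sqrt_of_nat_le \<open>0 \<le> \<epsilon>\<close>, of n] by simp
    then show "c * real n - \<epsilon> * real n - C \<le> real (rep_count A n)" by linarith
  qed (use \<open>0 \<le> s\<close> in auto)
  also have "\<dots> \<le> (\<Sum>a\<in>A \<inter> {..<N}. s ^ a)\<^sup>2"
    using \<open>0 \<le> s\<close> by (rule sum_rep_count_le_square_sum_power)
  finally have "(1 - s)\<^sup>2 * (c * ((s - real N * s ^ N) / (1 - s)\<^sup>2) - \<epsilon> * (1 / (1 - s)\<^sup>2) - C * (1 / (1 - s)))
      \<le> (1 - s)\<^sup>2 * (\<Sum>a\<in>A \<inter> {..<N}. s ^ a)\<^sup>2"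
    by (intro mult_left_mono) auto
  moreover have "(1 - s)\<^sup>2 * (c * ((s - real N * s ^ N) / (1 - s)\<^sup>2) - \<epsilon> * (1 / (1 - s)\<^sup>2) - C * (1 / (1 - s)))
      = c * (s - real N * s ^ N) - \<epsilon> - C * (1 - s)"
  proof -
    obtain t where t: "1 - s = t" "0 < t" using \<open>s < 1\<close> by simp
    show ?thesis unfolding t(1) using t(2) by (simp add: field_simps power2_eq_square)
  qed
  ultimately show ?thesis
    by (simp add: power_mult_distrib)
qed

lemma truncation_parameters_exist:
  fixes c \<epsilon> C :: real
  assumes "0 \<le> c" "c \<le> 1" "0 < \<epsilon>" "0 \<le> C"
  obtains s N where "0 < s" "s < 1" "0 < N"
    and "2 * \<epsilon>\<^sup>2 + 2 * C\<^sup>2 * (1 - s) + 4 * (1 - s)\<^sup>2 * real N ^ 3 * s ^ N \<le> (2 * \<epsilon>)\<^sup>2"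
    and "c - 4 * \<epsilon> \<le> c * (s - real N * s ^ N) - \<epsilon> - C * (1 - s)"
proof -
  have "\<forall>\<^sub>F t in at_right 0. 0 < t \<and> t < 1 \<and> t \<le> \<epsilon> \<and> 2 * C\<^sup>2 * t \<le> \<epsilon>\<^sup>2 \<and> C * t \<le> \<epsilon>"
    using assms by (intro eventually_conj; real_asymp)
  then obtain t where t: "0 < t" "t < 1" "t \<le> \<epsilon>" "2 * C\<^sup>2 * t \<le> \<epsilon>\<^sup>2" "C * t \<le> \<epsilon>"
    using eventually_happens'[of "at_right (0::real)"] by auto
  have "\<forall>\<^sub>F N in sequentially. 0 < N \<and> real N ^ 3 * (1 - t) ^ N \<le> \<epsilon>\<^sup>2 / 4 \<and> real N * (1 - t) ^ N \<le> \<epsilon>"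
    using assms t by (intro eventually_conj; real_asymp)
  then obtain N where N: "0 < N" "real N ^ 3 * (1 - t) ^ N \<le> \<epsilon>\<^sup>2 / 4" "real N * (1 - t) ^ N \<le> \<epsilon>"
    using eventually_happens'[of sequentially] by auto
  show ?thesis
  proof (rule that[of "1 - t" N])
    have "t\<^sup>2 * (real N ^ 3 * (1 - t) ^ N) \<le> 1 * (\<epsilon>\<^sup>2 / 4)"
      using N t by (intro mult_mono) (auto simp: power_le_one)
    then show "2 * \<epsilon>\<^sup>2 + 2 * C\<^sup>2 * (1 - (1 - t)) + 4 * (1 - (1 - t))\<^sup>2 * real N ^ 3 * (1 - t) ^ N
        \<le> (2 * \<epsilon>)\<^sup>2"
      using t by (simp add: power2_eq_square)
    have "c * (t + real N * (1 - t) ^ N) \<le> t + real N * (1 - t) ^ N"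
      using assms t by (intro mult_left_le_one_le) auto
    then show "c - 4 * \<epsilon> \<le> c * ((1 - t) - real N * (1 - t) ^ N) - \<epsilon> - C * (1 - (1 - t))"
      using t N by (simp add: algebra_simps)
  qed (use t N in auto)
qed

lemma rep_count_not_linear_with_small_sqrt_error:
  fixes A :: "nat set" and c \<epsilon> C :: real
  assumes "0 < c" "c < 1" "0 < \<epsilon>" "\<epsilon> \<le> c * (1 - c) / 20" "0 \<le> C"
    and err: "\<And>n. \<bar>real (rep_count A n) - c * real n\<bar> \<le> \<epsilon> * sqrt n + C"
  shows False
proof -
  obtain s N where s: "0 < s" "s < 1" and "0 < N"
    and upper_error: "2 * \<epsilon>\<^sup>2 + 2 * C\<^sup>2 * (1 - s) + 4 * (1 - s)\<^sup>2 * real N ^ 3 * s ^ N \<le> (2 * \<epsilon>)\<^sup>2"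
    and lower_error: "c - 4 * \<epsilon> \<le> c * (s - real N * s ^ N) - \<epsilon> - C * (1 - s)"
    using truncation_parameters_exist[of c \<epsilon> C] assms by auto
  define y where "y = (1 - s) * (\<Sum>a\<in>A \<inter> {..<N}. s ^ a)"
  have "y \<le> c + sqrt (2 * \<epsilon>\<^sup>2 + 2 * C\<^sup>2 * (1 - s) + 4 * (1 - s)\<^sup>2 * real N ^ 3 * s ^ N)"
    unfolding y_def using assms s err by (intro truncated_generating_function_upper) auto
  also have "\<dots> \<le> c + sqrt ((2 * \<epsilon>)\<^sup>2)"
    using upper_error by (intro add_left_mono real_sqrt_le_mono)
  also have "\<dots> = c + 2 * \<epsilon>"
    using \<open>0 < \<epsilon>\<close> by (subst real_sqrt_abs) simp
  finally have upper: "y \<le> c + 2 * \<epsilon>" .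
  have "\<epsilon> \<le> 1"
    using assms mult_le_one[of c "1 - c"] by auto
  then have small_terms: "c * \<epsilon> \<le> \<epsilon>" "\<epsilon>\<^sup>2 \<le> \<epsilon>"
    using assms by (simp_all add: power2_eq_square mult_le_cancel_right1)
  have "c - 4 * \<epsilon> \<le> y\<^sup>2"
    unfolding y_def using assms s \<open>0 < N\<close> err
    by (intro order_trans[OF lower_error] truncated_generating_function_lower) auto
  also have "\<dots> \<le> (c + 2 * \<epsilon>)\<^sup>2"
    using upper s by (intro power_mono) (auto simp: y_def sum_nonneg)
  finally have "c - 4 * \<epsilon> \<le> c\<^sup>2 + 4 * (c * \<epsilon>) + 4 * \<epsilon>\<^sup>2"
    by (simp add: power2_eq_square algebra_simps)
  moreover have "c * (1 - c) = c - c\<^sup>2"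
    by (simp add: algebra_simps power2_eq_square)
  ultimately show False
    using small_terms assms(3,4) by linarith
qed

theorem theorem10:
  fixes c :: real
  assumes "0 < c" and "c < 1"
  shows "\<not> (\<exists>A :: nat set.
           (\<lambda>n. real (rep_count A n) - c * real n) \<in> o(\<lambda>n. sqrt (real n)))"
proof
  assume "\<exists>A :: nat set. (\<lambda>n. real (rep_count A n) - c * real n) \<in> o(\<lambda>n. sqrt (real n))"
  then obtain A :: "nat set" where small: "(\<lambda>n. real (rep_count A n) - c * real n) \<in> o(\<lambda>n. sqrt (real n))"
    by blast
  have "0 < c * (1 - c) / 20"
    using assms by simp
  obtain C where "0 \<le> C"
    "\<And>n. \<bar>real (rep_count A n) - c * real n\<bar> \<le> c * (1 - c) / 20 * \<bar>sqrt (real n)\<bar> + C"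
    using smallo_imp_le_mult_plus_const[OF small \<open>0 < c * (1 - c) / 20\<close>] by blast
  with assms \<open>0 < c * (1 - c) / 20\<close> show False
    by (intro rep_count_not_linear_with_small_sqrt_error[where \<epsilon> = "c * (1 - c) / 20"]) auto
qed

end
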